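(* Let $L>0$, let $v_\textup{d}>0$ be a constant, and let $K:\mathbb{R}\to\mathbb{R}$ satisfy the following: the support of $K$ is $[0,R]$ with $0<R<L$; $K\in C^2(0,R)$ with $K,K''\in L^\infty(0,R)$; $K(z)>0$ and $K'(z)<0$ for $z\in(0,R)$; $K(0)=K(R)=0$ and $K(0^+):=\lim_{z\to0^+}K(z)>0$. Consider on the periodic domain $[0,L)$ the nonlocal conservation law \[ \partial_t\rho_t+\partial_x\Big(\rho_t\Big(v_\textup{d}-\int K(y-x)\rho_t(y)\,dy\Big)\Big)=0. \] Then every spatially homogeneous (constant) density $\rho_t(x)\equiv\bar\rho\ge0$ is a solution, and it is locally (i.e. linearly) stable and attractive: for the linearized equation around $\bar\rho$, every spatially periodic Fourier mode $e^{\sigma_k t+\mathbf{i}\frac{2\pi}{L}kx}$ with $k\in\mathbb{Z}\setminus\{0\}$ has $\operatorname{Re}(\sigma_k)<0$.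
   Context: $\mathbf{i}$ denotes the imaginary unit. For the constant solution the velocity is $v[\bar\rho]=v_\textup{d}-\bar\rho\int_0^RK(z)\,dz$. The constant mode $k=0$ is excluded since it corresponds to a constant-in-space perturbation. *)

theory Defs
  imports "HOL-Analysis.Analysis"
begin

definition kernel_assms :: "(real \<Rightarrow> real) \<Rightarrow> real \<Rightarrow> bool" where
  "kernel_assms K R \<longleftrightarrow>
     0 < R \<and>
     closure {z. K z \<noteq> 0} = {0..R} \<and>
     (\<exists>K1 K2. (\<forall>z\<in>{0<..<R}. (K has_real_derivative K1 z) (at z)) \<and>
              (\<forall>z\<in>{0<..<R}. (K1 has_real_derivative K2 z) (at z)) \<and>
              continuous_on {0<..<R} K2 \<and>
              bounded (K ` {0<..<R}) \<and> bounded (K2 ` {0<..<R}) \<and>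
              (\<forall>z\<in>{0<..<R}. K1 z < 0)) \<and>
     (\<forall>z\<in>{0<..<R}. K z > 0) \<and>
     K 0 = 0 \<and> K R = 0 \<and>
     (\<exists>c>0. (K \<longlongrightarrow> c) (at_right 0))"

text \<open>Flux of the nonlocal conservation law
  d/dt rho + d/dx (rho (v_d - int K(y-x) rho(y) dy)) = 0 (x in R, rho L-periodic in x).\<close>
definition nl_flux :: "(real \<Rightarrow> real) \<Rightarrow> real \<Rightarrow> (real \<Rightarrow> real \<Rightarrow> real) \<Rightarrow> real \<Rightarrow> real \<Rightarrow> real" where
  "nl_flux K vd rho t x = rho t x * (vd - integral UNIV (\<lambda>y. K (y - x) * rho t y))"

definition nl_solution :: "(real \<Rightarrow> real) \<Rightarrow> real \<Rightarrow> (real \<Rightarrow> real \<Rightarrow> real) \<Rightarrow> bool" where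
  "nl_solution K vd rho \<longleftrightarrow>
     (\<forall>t>0. \<forall>x. \<exists>a b. ((\<lambda>s. rho s x) has_real_derivative a) (at t) \<and>
                     ((\<lambda>y. nl_flux K vd rho t y) has_real_derivative b) (at x) \<and>
                     a + b = 0)"

definition v_const :: "(real \<Rightarrow> real) \<Rightarrow> real \<Rightarrow> real \<Rightarrow> real \<Rightarrow> real" where
  "v_const K R vd rhob = vd - rhob * integral {0..R} K"

definition lin_flux :: "(real \<Rightarrow> real) \<Rightarrow> real \<Rightarrow> real \<Rightarrow> real \<Rightarrow> (real \<Rightarrow> real \<Rightarrow> complex) \<Rightarrow> real \<Rightarrow> real \<Rightarrow> complex" where
  "lin_flux K R vd rhob u t x =
     complex_of_real (v_const K R vd rhob) * u t x
     - complex_of_real rhob * integral UNIV (\<lambda>y. complex_of_real (K (y - x)) * u t y)"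

definition lin_solution :: "(real \<Rightarrow> real) \<Rightarrow> real \<Rightarrow> real \<Rightarrow> real \<Rightarrow> (real \<Rightarrow> real \<Rightarrow> complex) \<Rightarrow> bool" where
  "lin_solution K R vd rhob u \<longleftrightarrow>
     (\<forall>t>0. \<forall>x. \<exists>a b. ((\<lambda>s. u s x) has_vector_derivative a) (at t) \<and>
                     ((\<lambda>y. lin_flux K R vd rhob u t y) has_vector_derivative b) (at x) \<and>
                     a + b = 0)"

definition fourier_mode :: "real \<Rightarrow> int \<Rightarrow> complex \<Rightarrow> real \<Rightarrow> real \<Rightarrow> complex" where
  "fourier_mode L k \<sigma> t x = exp (\<sigma> * complex_of_real t + \<i> * complex_of_real (2 * pi / L * of_int k * x))"

end

theory Submission
  imports Defs
begin

text \<open>A constant density has spatially constant flux, so it is a stationary solution. In the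
  linearized equation the convolution acts on the mode exp(sigma t + i w x), w = 2 pi k / L, as
  multiplication by the transform Khat(w) = int_0^R K(z) exp(i w z) dz, which yields the dispersion
  relation sigma = - i w (v[rho] - rho Khat(w)) and hence Re sigma = - rho w Im Khat(w). Integration
  by parts against 1 - cos(w z) gives
  w int_0^R K(z) sin(w z) dz = K(R-) (1 - cos(w R)) + int_0^R (- K'(z)) (1 - cos(w z)) dz,
  which is positive because K is decreasing with K(R-) >= 0.\<close>

lemma has_integral_translate_UNIV:
  fixes f :: "real \<Rightarrow> 'a::banach"
  assumes "(f has_integral I) {a..b}" and "\<And>z. z \<notin> {a..b} \<Longrightarrow> f z = 0"
  shows "((\<lambda>y. f (y - x)) has_integral I) UNIV"
proof -
  have "((\<lambda>y. f (y - x)) has_integral I) {a + x..b + x}"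
    using has_integral_shift_real_ivl[OF assms(1), of "- x"] by simp
  then show ?thesis
    by (rule has_integral_on_superset) (use assms(2) in auto)
qed

lemma tendsto_Inf_at_left_if_antimono:
  fixes f :: "real \<Rightarrow> real"
  assumes "a < b" and antimono: "\<And>x y. a < x \<Longrightarrow> x \<le> y \<Longrightarrow> y < b \<Longrightarrow> f y \<le> f x"
    and bdd: "bdd_below (f ` {a<..<b})"
  shows "(f \<longlongrightarrow> Inf (f ` {a<..<b})) (at_left b)"
proof (rule order_tendstoI)
  fix y assume "y < Inf (f ` {a<..<b})"
  then have "y < f z" if "z \<in> {a<..<b}" for z
    using cInf_lower[OF imageI[OF that] bdd] by linarith
  then show "eventually (\<lambda>z. y < f z) (at_left b)"
    unfolding eventually_at_left[OF \<open>a < b\<close>] by (intro exI[of _ a]) (use \<open>a < b\<close> in auto)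
next
  fix y assume "Inf (f ` {a<..<b}) < y"
  then obtain z0 where z0: "z0 \<in> {a<..<b}" "f z0 < y"
    using cInf_lessD[of "f ` {a<..<b}" y] \<open>a < b\<close> by force
  then have "f z < y" if "z \<in> {z0<..<b}" for z
    using antimono[of z0 z] that by fastforce
  then show "eventually (\<lambda>z. f z < y) (at_left b)"
    using eventually_at_left_real[of z0 b] z0(1) by (auto elim: eventually_mono)
qed

lemma continuous_on_Icc_glue_limits:
  fixes f :: "real \<Rightarrow> real"
  assumes "a < b" and "continuous_on {a<..<b} f"
    and "(f \<longlongrightarrow> c) (at_right a)" and "(f \<longlongrightarrow> d) (at_left b)"
  shows "continuous_on {a..b} (\<lambda>z. if z \<le> a then c else if b \<le> z then d else f z)"
    (is "continuous_on _ ?g")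
proof (rule continuous_on_IccI)
  have "eventually (\<lambda>z. f z = ?g z) (at_right a)"
    unfolding eventually_at_right[OF \<open>a < b\<close>] by (intro exI[of _ b]) (use assms(1) in auto)
  then show "(?g \<longlongrightarrow> ?g a) (at_right a)"
    using assms(1,3) tendsto_cong by force
  have "eventually (\<lambda>z. f z = ?g z) (at_left b)"
    unfolding eventually_at_left[OF \<open>a < b\<close>] by (intro exI[of _ a]) (use assms(1) in auto)
  then show "(?g \<longlongrightarrow> ?g b) (at_left b)"
    using assms(1,4) tendsto_cong by force
  fix x assume x: "a < x" "x < b"
  have "(f \<longlongrightarrow> f x) (at x)"
    using assms(2) x continuous_on_interior[of "{a<..<b}" f x] by (simp add: isCont_def)
  moreover have "eventually (\<lambda>z. f z = ?g z) (at x)"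
    using eventually_at_in_open'[of "{a<..<b}" x] x by (auto elim: eventually_mono)
  ultimately show "(?g \<longlongrightarrow> ?g x) (at x)"
    using x tendsto_cong by force
qed (rule assms(1))

lemma cos_mult_antimono:
  fixes w a z :: real
  assumes "0 \<le> a" and "a \<le> z" and "\<bar>w\<bar> * z \<le> pi"
  shows "cos (w * z) \<le> cos (w * a)"
proof -
  have "\<bar>w * a\<bar> \<le> \<bar>w * z\<bar>" and "\<bar>w * z\<bar> \<le> pi"
    using assms by (simp_all add: abs_mult mult_left_mono)
  then have "cos \<bar>w * z\<bar> \<le> cos \<bar>w * a\<bar>"
    by (intro cos_monotone_0_pi_le) simp_all
  then show ?thesis
    by simp
qed

lemma sine_integral_by_parts:
  fixes g g' :: "real \<Rightarrow> real"
  assumes "0 \<le> R" and g: "continuous_on {0..R} g"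
    and g': "\<And>z. z \<in> {0<..<R} \<Longrightarrow> (g has_real_derivative g' z) (at z)"
  shows "((\<lambda>z. - g' z * (1 - cos (w * z))) has_integral
           w * integral {0..R} (\<lambda>z. g z * sin (w * z)) - g R * (1 - cos (w * R))) {0..R}"
proof -
  have "((\<lambda>z. w * (g z * sin (w * z))) has_integral
      w * integral {0..R} (\<lambda>z. g z * sin (w * z))) {0..R}"
    by (intro has_integral_mult_right integrable_integral integrable_continuous_interval
        continuous_intros g)
  moreover have "((\<lambda>z. g' z * (1 - cos (w * z)) + w * (g z * sin (w * z))) has_integral
      g R * (1 - cos (w * R)) - g 0 * (1 - cos (w * 0))) {0..R}"
  proof (rule fundamental_theorem_of_calculus_interior)
    show "continuous_on {0..R} (\<lambda>z. g z * (1 - cos (w * z)))"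
      by (intro continuous_intros g)
    fix z assume "z \<in> {0<..<R}"
    then show "((\<lambda>z. g z * (1 - cos (w * z))) has_vector_derivative
        g' z * (1 - cos (w * z)) + w * (g z * sin (w * z))) (at z)"
      unfolding has_real_derivative_iff_has_vector_derivative[symmetric]
      by (auto intro!: derivative_eq_intros g' simp: algebra_simps)
  qed (rule assms(1))
  ultimately show ?thesis
    by (auto dest: has_integral_diff simp: algebra_simps)
qed

lemma neg_deriv_one_minus_cos_integral_pos:
  fixes g g' :: "real \<Rightarrow> real"
  assumes R: "0 < R" and g: "continuous_on {0..R} g"
    and g': "\<And>z. z \<in> {0<..<R} \<Longrightarrow> (g has_real_derivative g' z) (at z)"
    and neg: "\<And>z. z \<in> {0<..<R} \<Longrightarrow> g' z < 0" and w: "w \<noteq> 0"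
    and I: "((\<lambda>z. - g' z * (1 - cos (w * z))) has_integral I) {0..R}"
  shows "0 < I"
proof -
  define P where "P = (\<lambda>z. - g' z * (1 - cos (w * z)))"
  have IP: "(P has_integral I) {0<..<R}"
    using I by (simp add: P_def has_integral_Icc_iff_Ioo)
  define b where "b = min (R / 2) (pi / \<bar>w\<bar>)"
  define a where "a = b / 2"
  have ab: "0 < a" "a < b" "b < R" "\<bar>w\<bar> * b \<le> pi"
    using R w pi_gt_zero by (auto simp: a_def b_def min_def field_simps) (smt (verit) pi_gt_zero)
  define \<delta> where "\<delta> = 1 - cos (w * a)"
  have "cos \<bar>w * a\<bar> < cos 0"
    using ab w by (intro cos_monotone_0_pi) (auto simp: abs_mult intro: order_trans[OF _ ab(4)])
  then have \<delta>: "0 < \<delta>"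
    by (simp add: \<delta>_def)
  have "- g' z * \<delta> \<le> P z" if z: "z \<in> {a..b}" for z
  proof -
    have "cos (w * z) \<le> cos (w * a)"
      using ab z by (intro cos_mult_antimono) (auto intro: order_trans[OF mult_left_mono ab(4)])
    moreover have "g' z < 0"
      using neg z ab by auto
    ultimately show ?thesis
      by (auto simp: P_def \<delta>_def intro!: mult_left_mono_neg)
  qed
  moreover have "((\<lambda>z. - g' z * \<delta>) has_integral (g a - g b) * \<delta>) {a..b}"
  proof -
    have "(g' has_integral g b - g a) {a..b}"
      using ab by (intro fundamental_theorem_of_calculus_interior continuous_on_subset[OF g])
        (auto simp: has_real_derivative_iff_has_vector_derivative[symmetric] intro!: g')
    then show ?thesis
      using has_integral_mult_left[of g' "g b - g a" "{a..b}" "- \<delta>"] by (simp add: algebra_simps)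
  qed
  moreover have intP: "P integrable_on {a..b}"
    using IP ab by (intro integrable_on_subinterval[of _ "{0<..<R}"]) auto
  ultimately have "(g a - g b) * \<delta> \<le> integral {a..b} P"
    by (intro has_integral_le[OF _ integrable_integral]) auto
  also have "\<dots> \<le> I"
  proof (rule has_integral_subset_le[OF _ integrable_integral IP])
    show "{a..b} \<subseteq> {0<..<R}"
      using ab by auto
    show "\<forall>z\<in>{0<..<R}. 0 \<le> P z"
    proof
      fix z assume "z \<in> {0<..<R}"
      then have "0 \<le> - g' z"
        using neg[of z] by simp
      moreover have "0 \<le> 1 - cos (w * z)"
        by simp
      ultimately show "0 \<le> P z"
        unfolding P_def by (rule mult_nonneg_nonneg)
    qed
  qed (rule intP)
  finally have "(g a - g b) * \<delta> \<le> I" .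
  moreover have "g b < g a"
  proof (rule DERIV_neg_imp_decreasing_open[of a b g])
    fix z assume "a < z" "z < b"
    then have "z \<in> {0<..<R}" using ab by auto
    then show "\<exists>y. (g has_real_derivative y) (at z) \<and> y < 0" using g' neg by blast
  qed (use ab in \<open>auto intro: continuous_on_subset[OF g]\<close>)
  ultimately show ?thesis
    using \<delta> mult_pos_pos[of "g a - g b" \<delta>] by linarith
qed

lemma sine_integral_pos_if_decreasing:
  fixes g g' :: "real \<Rightarrow> real"
  assumes R: "0 < R" and g: "continuous_on {0..R} g"
    and g': "\<And>z. z \<in> {0<..<R} \<Longrightarrow> (g has_real_derivative g' z) (at z)"
    and neg: "\<And>z. z \<in> {0<..<R} \<Longrightarrow> g' z < 0" and gR: "0 \<le> g R" and w: "w \<noteq> 0"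
  shows "0 < w * integral {0..R} (\<lambda>z. g z * sin (w * z))"
proof -
  have "0 < w * integral {0..R} (\<lambda>z. g z * sin (w * z)) - g R * (1 - cos (w * R))"
    using R g g' by (intro neg_deriv_one_minus_cos_integral_pos[OF R g g' neg w]
        sine_integral_by_parts) auto
  moreover have "0 \<le> g R * (1 - cos (w * R))"
    using gR by simp
  ultimately show ?thesis
    by linarith
qed

lemma kernel_assms_vanishes:
  assumes "kernel_assms K R" and "z \<notin> {0..R}"
  shows "K z = 0"
  using assms closure_subset[of "{z. K z \<noteq> 0}"] unfolding kernel_assms_def by blast

lemma kernel_assms_continuous_extension:
  assumes "kernel_assms K R"
  obtains g K' where "continuous_on {0..R} g" and "\<And>z. z \<in> {0<..<R} \<Longrightarrow> g z = K z"
    and "\<And>z. z \<in> {0<..<R} \<Longrightarrow> (g has_real_derivative K' z) (at z)"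
    and "\<And>z. z \<in> {0<..<R} \<Longrightarrow> K' z < 0" and "0 \<le> g R"
proof -
  from assms obtain K' c where R: "0 < R"
    and K': "\<forall>z\<in>{0<..<R}. (K has_real_derivative K' z) (at z)"
    and neg: "\<forall>z\<in>{0<..<R}. K' z < 0" and pos: "\<forall>z\<in>{0<..<R}. 0 < K z"
    and c: "(K \<longlongrightarrow> c) (at_right 0)"
    unfolding kernel_assms_def by blast
  define d where "d = Inf (K ` {0<..<R})"
  have "K y \<le> K x" if "0 < x" "x \<le> y" "y < R" for x y
  proof (rule DERIV_nonpos_imp_nonincreasing[of x y K])
    fix z assume "x \<le> z" "z \<le> y"
    then have "z \<in> {0<..<R}" using that by auto
    then show "\<exists>D. (K has_real_derivative D) (at z) \<and> D \<le> 0"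
      using K' neg less_imp_le by blast
  qed (use that in simp)
  moreover have bdd: "bdd_below (K ` {0<..<R})"
    using pos by (intro bdd_belowI[of _ 0]) (auto intro: less_imp_le)
  ultimately have d: "(K \<longlongrightarrow> d) (at_left R)"
    unfolding d_def using R by (rule tendsto_Inf_at_left_if_antimono[rotated])
  have "0 \<le> d"
    unfolding d_def using R pos by (intro cInf_greatest) (auto intro: less_imp_le)
  define g where "g = (\<lambda>z. if z \<le> 0 then c else if R \<le> z then d else K z)"
  have "continuous_on {0<..<R} K"
    using K' by (intro continuous_at_imp_continuous_on) (auto intro: DERIV_isCont)
  then have "continuous_on {0..R} g"
    unfolding g_def using continuous_on_Icc_glue_limits[OF R _ c d] by blast
  moreover have gK: "g z = K z" if "z \<in> {0<..<R}" for z
    using that by (simp add: g_def)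
  moreover have "(g has_real_derivative K' z) (at z)" if "z \<in> {0<..<R}" for z
    using has_field_derivative_transform_within_open[of K "K' z" z "{0<..<R}" g] K' gK that
    by auto
  moreover have "0 \<le> g R"
    using \<open>0 \<le> d\<close> R by (simp add: g_def)
  ultimately show thesis
    using that neg by blast
qed

lemma kernel_assms_integrable_scaleR:
  fixes h :: "real \<Rightarrow> 'a::banach"
  assumes "kernel_assms K R" and "continuous_on {0..R} h"
  shows "(\<lambda>z. K z *\<^sub>R h z) integrable_on {0..R}"
proof -
  obtain g where g: "continuous_on {0..R} g" "\<And>z. z \<in> {0<..<R} \<Longrightarrow> g z = K z"
    using kernel_assms_continuous_extension[OF assms(1)] by metis
  have "(\<lambda>z. g z *\<^sub>R h z) integrable_on {0<..<R}"
    unfolding integrable_on_Icc_iff_Ioo[symmetric]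
    by (intro integrable_continuous_interval continuous_intros g(1) assms(2))
  moreover have "(\<lambda>z. K z *\<^sub>R h z) integrable_on {0<..<R} \<longleftrightarrow>
      (\<lambda>z. g z *\<^sub>R h z) integrable_on {0<..<R}"
    by (rule integrable_cong) (simp add: g(2))
  ultimately show ?thesis
    unfolding integrable_on_Icc_iff_Ioo by blast
qed

lemma kernel_assms_sine_integral_pos:
  assumes "kernel_assms K R" and "w \<noteq> 0"
  shows "0 < w * integral {0..R} (\<lambda>z. K z * sin (w * z))"
proof -
  obtain g K' where g: "continuous_on {0..R} g" "\<And>z. z \<in> {0<..<R} \<Longrightarrow> g z = K z"
    and "\<And>z. z \<in> {0<..<R} \<Longrightarrow> (g has_real_derivative K' z) (at z)"
    and "\<And>z. z \<in> {0<..<R} \<Longrightarrow> K' z < 0" and "0 \<le> g R"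
    using kernel_assms_continuous_extension[OF assms(1)] by metis
  moreover have "0 < R" using assms(1) by (simp add: kernel_assms_def)
  ultimately have "0 < w * integral {0..R} (\<lambda>z. g z * sin (w * z))"
    using assms(2) by (intro sine_integral_pos_if_decreasing)
  also have "integral {0..R} (\<lambda>z. g z * sin (w * z)) = integral {0..R} (\<lambda>z. K z * sin (w * z))"
    unfolding integral_open_interval_real by (rule integral_cong) (simp add: g(2))
  finally show ?thesis .
qed

definition kernel_transform :: "(real \<Rightarrow> real) \<Rightarrow> real \<Rightarrow> real \<Rightarrow> complex" where
  "kernel_transform K R w = integral {0..R} (\<lambda>z. of_real (K z) * exp (\<i> * of_real (w * z)))"

lemma kernel_assms_has_integral_transform:
  assumes "kernel_assms K R"
  shows "((\<lambda>z. of_real (K z) * exp (\<i> * of_real (w * z))) has_integral kernel_transform K R w) {0..R}"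
proof -
  have "(\<lambda>z. K z *\<^sub>R exp (\<i> * of_real (w * z))) integrable_on {0..R}"
    by (intro kernel_assms_integrable_scaleR[OF assms] continuous_intros)
  then show ?thesis
    unfolding kernel_transform_def by (simp add: scaleR_conv_of_real integrable_integral)
qed

lemma kernel_assms_Im_transform_pos:
  assumes "kernel_assms K R" and "w \<noteq> 0"
  shows "0 < w * Im (kernel_transform K R w)"
proof -
  have "((\<lambda>z. K z * sin (w * z)) has_integral Im (kernel_transform K R w)) {0..R}"
    using has_integral_linear[OF kernel_assms_has_integral_transform[OF assms(1)] bounded_linear_Im]
    by (simp add: o_def Im_exp Re_exp)
  then show ?thesis
    using kernel_assms_sine_integral_pos[OF assms] by (simp add: integral_unique)
qed

lemma kernel_assms_convolution_exp:
  assumes "kernel_assms K R"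
  shows "((\<lambda>y. of_real (K (y - x)) * exp (\<i> * of_real (w * y))) has_integral
           exp (\<i> * of_real (w * x)) * kernel_transform K R w) UNIV"
proof -
  have "((\<lambda>y. of_real (K (y - x)) * exp (\<i> * of_real (w * (y - x))))
      has_integral kernel_transform K R w) UNIV"
    by (rule has_integral_translate_UNIV[OF kernel_assms_has_integral_transform[OF assms]])
      (simp add: kernel_assms_vanishes[OF assms])
  from has_integral_mult_right[OF this, of "exp (\<i> * of_real (w * x))"]
  show ?thesis
    by (simp add: mult.left_commute flip: exp_add) (simp add: algebra_simps)
qed

lemma nl_solution_const:
  assumes "kernel_assms K R"
  shows "nl_solution K vd (\<lambda>t x. c)"
proof -
  have "(K has_integral integral {0..R} K) {0..R}"
    using kernel_assms_integrable_scaleR[OF assms, of "\<lambda>_. 1::real"]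
    by (simp add: integrable_integral)
  then have "((\<lambda>y. K (y - x)) has_integral integral {0..R} K) UNIV" for x
    by (rule has_integral_translate_UNIV) (simp add: kernel_assms_vanishes[OF assms])
  then have "integral UNIV (\<lambda>y. K (y - x) * c) = integral {0..R} K * c" for x
    by (intro integral_unique has_integral_mult_left)
  then have "nl_flux K vd (\<lambda>t x. c) t = (\<lambda>_. c * (vd - integral {0..R} K * c))" for t
    unfolding nl_flux_def by (simp only:)
  then show ?thesis
    unfolding nl_solution_def by (intro allI impI exI[of _ 0]) auto
qed

lemma lin_flux_fourier_mode:
  assumes "kernel_assms K R"
  shows "lin_flux K R vd rhob (fourier_mode L k \<sigma>) t x =
    (of_real (v_const K R vd rhob) - of_real rhob * kernel_transform K R (2 * pi / L * of_int k))
      * fourier_mode L k \<sigma> t x"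
proof -
  define w where "w = 2 * pi / L * of_int k"
  have mode: "fourier_mode L k \<sigma> t y = exp (\<sigma> * of_real t) * exp (\<i> * of_real (w * y))" for y
    by (simp add: fourier_mode_def w_def exp_add)
  have "((\<lambda>y. exp (\<sigma> * of_real t) * (of_real (K (y - x)) * exp (\<i> * of_real (w * y))))
      has_integral exp (\<sigma> * of_real t) * (exp (\<i> * of_real (w * x)) * kernel_transform K R w)) UNIV"
    by (rule has_integral_mult_right[OF kernel_assms_convolution_exp[OF assms]])
  then have "integral UNIV (\<lambda>y. of_real (K (y - x)) * fourier_mode L k \<sigma> t y) =
      fourier_mode L k \<sigma> t x * kernel_transform K R w"
    unfolding mode by (intro integral_unique) (simp add: mult_ac)
  then show ?thesis
    unfolding lin_flux_def w_def by (simp add: algebra_simps)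
qed

lemma fourier_mode_time_derivative:
  "((\<lambda>s. fourier_mode L k \<sigma> s x) has_vector_derivative \<sigma> * fourier_mode L k \<sigma> t x) (at t)"
  unfolding fourier_mode_def
  by (rule has_vector_derivative_real_field) (auto intro!: derivative_eq_intros)

lemma fourier_mode_space_derivative:
  "((\<lambda>y. fourier_mode L k \<sigma> t y) has_vector_derivative
     \<i> * of_real (2 * pi / L * of_int k) * fourier_mode L k \<sigma> t x) (at x)"
proof -
  define w where "w = 2 * pi / L * of_int k"
  have "((\<lambda>z. exp (\<sigma> * of_real t + \<i> * (of_real w * z))) has_field_derivative
      \<i> * of_real w * exp (\<sigma> * of_real t + \<i> * (of_real w * of_real x))) (at (of_real x))"
    by (auto intro!: derivative_eq_intros simp: algebra_simps)
  from has_vector_derivative_real_field[OF this] show ?thesis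
    by (simp add: fourier_mode_def w_def)
qed

lemma lin_solution_fourier_mode_iff:
  fixes K :: "real \<Rightarrow> real" and R vd rhob L :: real and k :: int and \<sigma> :: complex
  assumes "kernel_assms K R"
  defines "w \<equiv> 2 * pi / L * of_int k"
  defines "C \<equiv> of_real (v_const K R vd rhob) - of_real rhob * kernel_transform K R w"
  shows "lin_solution K R vd rhob (fourier_mode L k \<sigma>) \<longleftrightarrow> \<sigma> = - \<i> * of_real w * C"
proof -
  have dx: "((\<lambda>y. lin_flux K R vd rhob (fourier_mode L k \<sigma>) t y) has_vector_derivative
      C * (\<i> * of_real w * fourier_mode L k \<sigma> t x)) (at x)" for t x
    unfolding lin_flux_fourier_mode[OF assms(1)] C_def w_def
    by (intro has_vector_derivative_mult_right fourier_mode_space_derivative)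
  show ?thesis
  proof
    assume "lin_solution K R vd rhob (fourier_mode L k \<sigma>)"
    then obtain a b where
      a: "((\<lambda>s. fourier_mode L k \<sigma> s 0) has_vector_derivative a) (at 1)" and
      b: "((\<lambda>y. lin_flux K R vd rhob (fourier_mode L k \<sigma>) 1 y) has_vector_derivative b) (at 0)"
      and "a + b = 0"
      unfolding lin_solution_def by (meson zero_less_one)
    then have "(\<sigma> + C * (\<i> * of_real w)) * fourier_mode L k \<sigma> 1 0 = 0"
      using vector_derivative_unique_at[OF a fourier_mode_time_derivative]
        vector_derivative_unique_at[OF b dx] by (simp add: algebra_simps)
    moreover have "fourier_mode L k \<sigma> 1 0 \<noteq> 0"
      by (simp add: fourier_mode_def)
    ultimately have "\<sigma> + C * (\<i> * of_real w) = 0"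
      by simp
    then show "\<sigma> = - \<i> * of_real w * C"
      by (simp add: eq_neg_iff_add_eq_0 mult_ac)
  next
    assume \<sigma>: "\<sigma> = - \<i> * of_real w * C"
    show "lin_solution K R vd rhob (fourier_mode L k \<sigma>)"
      unfolding lin_solution_def
    proof (intro allI impI)
      fix t x :: real
      have "\<sigma> * fourier_mode L k \<sigma> t x + C * (\<i> * of_real w * fourier_mode L k \<sigma> t x) = 0"
        unfolding \<sigma> by (simp add: algebra_simps)
      then show "\<exists>a b. ((\<lambda>s. fourier_mode L k \<sigma> s x) has_vector_derivative a) (at t) \<and>
          ((\<lambda>y. lin_flux K R vd rhob (fourier_mode L k \<sigma>) t y) has_vector_derivative b) (at x) \<and>
          a + b = 0"
        using fourier_mode_time_derivative dx by blast
    qed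
  qed
qed

theorem mainTheorem2:
  fixes L R vd :: real and K :: "real \<Rightarrow> real"
  assumes "L > 0" and "vd > 0" and "kernel_assms K R" and "R < L"
  shows "(\<forall>rhob::real. rhob \<ge> 0 \<longrightarrow> nl_solution K vd (\<lambda>t x. rhob)) \<and>
         (\<forall>rhob::real. rhob > 0 \<longrightarrow> (\<forall>k::int. k \<noteq> 0 \<longrightarrow>
            (\<exists>\<sigma>. lin_solution K R vd rhob (fourier_mode L k \<sigma>)) \<and>
            (\<forall>\<sigma>. lin_solution K R vd rhob (fourier_mode L k \<sigma>) \<longrightarrow> Re \<sigma> < 0)))"
proof -
  have "nl_solution K vd (\<lambda>t x. rhob)" for rhob
    by (rule nl_solution_const[OF assms(3)])
  moreover have "(\<exists>\<sigma>. lin_solution K R vd rhob (fourier_mode L k \<sigma>)) \<and>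
      (\<forall>\<sigma>. lin_solution K R vd rhob (fourier_mode L k \<sigma>) \<longrightarrow> Re \<sigma> < 0)"
    if "0 < rhob" and "k \<noteq> 0" for rhob k
  proof -
    define w where "w = 2 * pi / L * of_int k"
    have "0 < w * Im (kernel_transform K R w)"
      using assms(1) \<open>k \<noteq> 0\<close> by (intro kernel_assms_Im_transform_pos[OF assms(3)]) (simp add: w_def)
    then have "Re (- \<i> * of_real w *
        (of_real (v_const K R vd rhob) - of_real rhob * kernel_transform K R w)) < 0"
      using \<open>0 < rhob\<close> by (simp add: mult.left_commute)
    then show ?thesis
      using lin_solution_fourier_mode_iff[OF assms(3)] unfolding w_def by auto
  qed
  ultimately show ?thesis
    by blast
qed

end
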